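(* Let $\mathcal{S}\subset\mathbb{R}^n$ be compact convex, and let $f_1,\dots,f_T:\mathcal{S}\to\mathbb{R}$ be differentiable, $\ell$-strongly convex and $u$-smooth (i.e. $\nabla f_t$ is $u$-Lipschitz) with $\|\nabla f_t(x)\|\le G$ on $\mathcal{S}$. Let $\theta_1\in\mathcal{S}$ and $$\theta_{t+1}=\operatorname{argmin}_{\theta\in\mathcal{S}}\big\|\theta-(\theta_t-\eta_t\nabla f_t(\theta_t))\big\|^2,\qquad \eta_t=\frac{1-\gamma}{\ell(\gamma-\gamma^t)+u(1-\gamma)},$$ with $1-\gamma=1/T^\beta$, $\beta\in(0,1)$. Let $\theta_t^*=\operatorname{argmin}_{\theta\in\mathcal{S}}f_t(\theta)$ and $V^*=\sum_{t=2}^T\|\theta_t^*-\theta_{t-1}^*\|$. Then $$\sum_{t=1}^T\big(f_t(\theta_t)-f_t(\theta_t^* )\big)\le G\big(2(T^\beta-1)+u/\ell\big)\big(\|\theta_1-\theta_1^*\|+V^*\big).$$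
   Context: $\ell$-strongly convex: $f(y)\ge f(x)+\nabla f(x)^\top(y-x)+\frac\ell2\|x-y\|^2$ for all $x,y\in\mathcal{S}$. *)

theory Defs
  imports "HOL-Analysis.Analysis"
begin

end

theory Submission
  imports Defs
begin

text \<open>
  For an l-strongly convex function with u-Lipschitz gradient, a projected gradient step with
  step size eta, eta u \<le> 1, is a contraction with factor 1 - eta l, and it fixes the minimizer.
  Hence the tracking errors e t = |theta t - theta* t| satisfy
  e (t + 1) \<le> (1 - eta t l) e t + |theta* (t + 1) - theta* t|, and the prescribed step sizes
  have eta t l \<ge> 1 / M with M = T^beta - 1 + u / l; summing the recursion gives
  sum e \<le> M (e 1 + V*).  Convexity and the gradient bound turn each regret term into at
  most G e t.

  The contraction factor comes from cocoercivity of the gradient of f - l/2 |x|^2.  Since the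
  functions are only controlled on S, cocoercivity is proved for the component of gradient
  differences along the affine hull of S: first between points having a common relative ball
  inside S, then on all of S by continuity.
\<close>

section \<open>Metric projection and first-order conditions\<close>

lemma closest_point_eqI:
  assumes "convex S" "closed S" "p \<in> S" "\<And>z. z \<in> S \<Longrightarrow> (a - p) \<bullet> (z - p) \<le> 0"
  shows "closest_point S a = p"
proof -
  have "dist a p \<le> dist a z" if "z \<in> S" for z
  proof -
    have "(norm (a - p))\<^sup>2 \<le> (norm (a - p))\<^sup>2 + (norm (p - z))\<^sup>2 - 2 * ((a - p) \<bullet> (z - p))"
      using assms(4)[OF that] zero_le_power2[of "norm (p - z)"] by linarith
    also have "\<dots> = (norm ((a - p) + (p - z)))\<^sup>2"
      by (simp add: power2_norm_eq_inner inner_add inner_diff inner_commute)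
    finally show ?thesis
      by (simp add: dist_norm power2_le_iff_abs_le)
  qed
  then show ?thesis
    using closest_point_unique[OF assms(1-3)] by simp
qed

lemma closest_point_firmly_nonexpansive:
  assumes "convex S" "closed S" "S \<noteq> {}"
  shows "(norm (closest_point S a - closest_point S b))\<^sup>2
           \<le> (a - b) \<bullet> (closest_point S a - closest_point S b)"
proof -
  have "(a - closest_point S a) \<bullet> (closest_point S b - closest_point S a) \<le> 0"
    and "(b - closest_point S b) \<bullet> (closest_point S a - closest_point S b) \<le> 0"
    using assms by (simp_all add: closest_point_dot closest_point_in_set)
  then show ?thesis
    by (simp add: power2_norm_eq_inner inner_diff algebra_simps)
qed

lemma has_real_derivative_along_line:
  assumes "(h has_derivative (\<lambda>v. g \<bullet> v)) (at (x + s *\<^sub>R d))"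
  shows "((\<lambda>s. h (x + s *\<^sub>R d)) has_real_derivative (g \<bullet> d)) (at s)"
proof -
  have "((\<lambda>s. x + s *\<^sub>R d) has_derivative (\<lambda>t. t *\<^sub>R d)) (at s)"
    by (auto intro!: derivative_eq_intros)
  from has_derivative_compose[OF this assms] show ?thesis
    unfolding has_field_derivative_def by (simp add: mult.commute[of _ "g \<bullet> d"])
qed

lemma descent_lemma:
  assumes "convex S" "x \<in> S" "y \<in> S"
    and deriv: "\<And>z. z \<in> S \<Longrightarrow> (h has_derivative (\<lambda>v. g z \<bullet> v)) (at z)"
    and lipschitz: "\<And>z w. z \<in> S \<Longrightarrow> w \<in> S \<Longrightarrow> norm (g z - g w) \<le> u * norm (z - w)"
  shows "h y \<le> h x + g x \<bullet> (y - x) + u / 2 * (norm (y - x))\<^sup>2"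
proof -
  define d where "d = y - x"
  define k where "k s = h (x + s *\<^sub>R d) - s * (g x \<bullet> d) - u / 2 * s\<^sup>2 * (norm d)\<^sup>2" for s
  have "k 1 \<le> k 0"
  proof (rule DERIV_nonpos_imp_nonincreasing[of 0 1 k])
    fix s :: real
    assume s: "0 \<le> s" "s \<le> 1"
    have in_S: "x + s *\<^sub>R d \<in> S"
      using convexD_alt[OF assms(1-3) s] by (simp add: d_def algebra_simps)
    have "(g (x + s *\<^sub>R d) - g x) \<bullet> d \<le> norm (g (x + s *\<^sub>R d) - g x) * norm d"
      by (rule norm_cauchy_schwarz)
    also have "\<dots> \<le> u * norm (s *\<^sub>R d) * norm d"
      using lipschitz[OF in_S \<open>x \<in> S\<close>] by (simp add: mult_right_mono)
    finally have "g (x + s *\<^sub>R d) \<bullet> d - g x \<bullet> d - u * s * (norm d)\<^sup>2 \<le> 0"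
      using s by (simp add: inner_diff_left power2_eq_square)
    moreover have "(k has_real_derivative g (x + s *\<^sub>R d) \<bullet> d - g x \<bullet> d - u * s * (norm d)\<^sup>2) (at s)"
      unfolding k_def
      by (auto intro!: derivative_eq_intros has_real_derivative_along_line deriv[OF in_S])
    ultimately show "\<exists>y. (k has_real_derivative y) (at s) \<and> y \<le> 0"
      by blast
  qed simp
  then show ?thesis
    by (simp add: k_def d_def algebra_simps)
qed

lemma first_order_optimality:
  assumes "convex S" "x \<in> S" "y \<in> S"
    and deriv: "(h has_derivative (\<lambda>v. g \<bullet> v)) (at x)"
    and min: "\<And>z. z \<in> S \<Longrightarrow> h x \<le> h z"
  shows "0 \<le> g \<bullet> (y - x)"
proof (rule ccontr)
  assume "\<not> 0 \<le> g \<bullet> (y - x)"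
  then have neg: "g \<bullet> (y - x) < 0" by simp
  have "((\<lambda>s. h (x + s *\<^sub>R (y - x))) has_real_derivative g \<bullet> (y - x)) (at 0)"
    by (rule has_real_derivative_along_line) (simp add: deriv)
  from DERIV_neg_dec_right[OF this neg] obtain d where "d > 0" and
    dec: "\<And>s. 0 < s \<Longrightarrow> s < d \<Longrightarrow> h (x + s *\<^sub>R (y - x)) < h x"
    by auto
  define s where "s = min (d / 2) 1"
  have s: "0 < s" "s < d" "s \<le> 1"
    using \<open>d > 0\<close> by (auto simp: s_def)
  have "x + s *\<^sub>R (y - x) \<in> S"
    using convexD_alt[OF assms(1-3), of s] s by (simp add: algebra_simps)
  then have "h x \<le> h (x + s *\<^sub>R (y - x))"
    by (rule min)
  with dec[OF s(1,2)] show False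
    by simp
qed

lemma closest_point_gradient_step_minimizer:
  assumes "convex S" "closed S" "x \<in> S" "0 \<le> \<eta>"
    and deriv: "(h has_derivative (\<lambda>v. g \<bullet> v)) (at x)"
    and min: "\<And>z. z \<in> S \<Longrightarrow> h x \<le> h z"
  shows "closest_point S (x - \<eta> *\<^sub>R g) = x"
proof (rule closest_point_eqI[OF assms(1-3)])
  fix z
  assume "z \<in> S"
  then show "(x - \<eta> *\<^sub>R g - x) \<bullet> (z - x) \<le> 0"
    using first_order_optimality[OF assms(1,3) _ deriv min] \<open>0 \<le> \<eta>\<close> by simp
qed

section \<open>Directions of a convex set\<close>

definition directions :: "'a::real_vector set \<Rightarrow> 'a set"
  where "directions S = span {x - y |x y. x \<in> S \<and> y \<in> S}"

lemma subspace_directions: "subspace (directions S)"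
  by (simp add: directions_def)

lemma diff_in_directions: "x \<in> S \<Longrightarrow> y \<in> S \<Longrightarrow> x - y \<in> directions S"
  unfolding directions_def by (rule span_base) blast

lemma rel_interior_directions_ball:
  fixes S :: "'a::euclidean_space set"
  assumes "c \<in> rel_interior S"
  obtains r where "0 < r" "\<And>v. v \<in> directions S \<Longrightarrow> norm v < r \<Longrightarrow> c + v \<in> S"
proof -
  obtain r where "0 < r" and r: "ball c r \<inter> affine hull S \<subseteq> S"
    using assms mem_rel_interior_ball by blast
  have "c \<in> S"
    using assms rel_interior_subset by blast
  have "directions S \<subseteq> span ((\<lambda>x. - c + x) ` S)"
    unfolding directions_def
  proof (rule span_minimal)
    show "{x - y |x y. x \<in> S \<and> y \<in> S} \<subseteq> span ((\<lambda>x. - c + x) ` S)"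
    proof clarify
      fix x y
      assume "x \<in> S" "y \<in> S"
      then have "(- c + x) - (- c + y) \<in> span ((\<lambda>x. - c + x) ` S)"
        by (intro span_diff span_base) auto
      then show "x - y \<in> span ((\<lambda>x. - c + x) ` S)"
        by simp
    qed
  qed simp
  then have aff: "c + v \<in> affine hull S" if "v \<in> directions S" for v
    using affine_hull_span_gen[OF hull_inc[OF \<open>c \<in> S\<close>]] that by blast
  show ?thesis
  proof (rule that[OF \<open>0 < r\<close>])
    fix v
    assume "v \<in> directions S" "norm v < r"
    then have "c + v \<in> ball c r \<inter> affine hull S"
      using aff by (simp add: dist_norm)
    then show "c + v \<in> S"
      using r by blast
  qed
qed

lemma segment_common_ball:
  assumes "convex S" "0 \<le> a" "a \<le> 1"
    and x: "\<And>v. v \<in> V \<Longrightarrow> norm v < r \<Longrightarrow> x + v \<in> S"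
    and y: "\<And>v. v \<in> V \<Longrightarrow> norm v < r \<Longrightarrow> y + v \<in> S"
    and "v \<in> V" "norm v < r"
  shows "x + a *\<^sub>R (y - x) + v \<in> S"
  using convexD_alt[OF assms(1) x[OF assms(6,7)] y[OF assms(6,7)] assms(2,3)]
  by (simp add: algebra_simps)

lemma shrink_directions_ball:
  assumes "convex S" "z \<in> S" "0 < s" "s \<le> 1"
    and c: "\<And>v. v \<in> directions S \<Longrightarrow> norm v < r \<Longrightarrow> c + v \<in> S"
    and "v \<in> directions S" "norm v < s * r"
  shows "z + s *\<^sub>R (c - z) + v \<in> S"
proof -
  have "c + (1 / s) *\<^sub>R v \<in> S"
    using assms(3,6,7) by (intro c) (auto simp: subspace_scale[OF subspace_directions] field_simps)
  from convexD_alt[OF assms(1,2) this, of s] assms(3,4) show ?thesis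
    by (simp add: algebra_simps)
qed

section \<open>Cocoercivity\<close>

text \<open>Cocoercivity tested against a vector c; this form only uses the function at points of S.\<close>

lemma gradient_pair_inequality:
  fixes \<phi> :: "'a::real_inner \<Rightarrow> real"
  assumes lower: "\<And>y z. y \<in> S \<Longrightarrow> z \<in> S \<Longrightarrow> \<phi> y + d\<phi> y \<bullet> (z - y) \<le> \<phi> z"
    and upper: "\<And>y z. y \<in> S \<Longrightarrow> z \<in> S \<Longrightarrow>
                  \<phi> z \<le> \<phi> y + d\<phi> y \<bullet> (z - y) + L / 2 * (norm (z - y))\<^sup>2"
    and "p \<in> S" "q \<in> S" "q - c \<in> S" "p + c \<in> S"
  shows "2 * ((d\<phi> q - d\<phi> p) \<bullet> c) - L * (norm c)\<^sup>2 \<le> (d\<phi> q - d\<phi> p) \<bullet> (q - p)"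
proof -
  have "\<phi> p + d\<phi> p \<bullet> (q - c - p) \<le> \<phi> (q - c)"
    and "\<phi> (q - c) \<le> \<phi> q + d\<phi> q \<bullet> (q - c - q) + L / 2 * (norm (q - c - q))\<^sup>2"
    and "\<phi> q + d\<phi> q \<bullet> (p + c - q) \<le> \<phi> (p + c)"
    and "\<phi> (p + c) \<le> \<phi> p + d\<phi> p \<bullet> (p + c - p) + L / 2 * (norm (p + c - p))\<^sup>2"
    using assms by blast+
  then show ?thesis
    by (simp add: inner_diff_right inner_add_right inner_diff_left)
qed

lemma quadratic_bound_imp_le:
  fixes N B L \<eta> \<alpha> :: real
  assumes bound: "\<And>t. (2 * t - L * t\<^sup>2) * N \<le> B"
    and "0 \<le> N" "0 < \<eta>" "0 \<le> \<alpha>" "\<eta> * L \<le> \<alpha>"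
  shows "\<eta> * N \<le> 2 * \<alpha> * B"
proof (cases "\<alpha> = 0")
  case True
  have "N \<le> 0"
  proof (rule ccontr)
    assume "\<not> N \<le> 0"
    define t where "t = (\<bar>B\<bar> + 1) / (2 * N)"
    have "2 * t * N = \<bar>B\<bar> + 1"
      using \<open>\<not> N \<le> 0\<close> by (simp add: t_def)
    moreover have "L \<le> 0"
      using \<open>0 < \<eta>\<close> \<open>\<eta> * L \<le> \<alpha>\<close> True by (simp add: mult_le_0_iff)
    then have "0 \<le> (- L) * (t\<^sup>2 * N)"
      using \<open>0 \<le> N\<close> by (intro mult_nonneg_nonneg) auto
    ultimately have "\<bar>B\<bar> + 1 \<le> (2 * t - L * t\<^sup>2) * N"
      by (simp add: left_diff_distrib)
    with bound[of t] show False
      by linarith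
  qed
  with True \<open>0 \<le> N\<close> show ?thesis
    by simp
next
  case False
  define t where "t = \<eta> / \<alpha>"
  have "0 < \<alpha>" "0 < t"
    using False \<open>0 \<le> \<alpha>\<close> \<open>0 < \<eta>\<close> by (simp_all add: t_def)
  have "L * t \<le> 1"
    using \<open>\<eta> * L \<le> \<alpha>\<close> \<open>0 < \<alpha>\<close> by (simp add: t_def mult.commute pos_divide_le_eq)
  then have "t \<le> 2 * t - L * t\<^sup>2"
    using \<open>0 < t\<close> mult_left_mono[of "L * t" 1 t] by (simp add: power2_eq_square mult.assoc)
  then have "t * N \<le> B"
    using mult_right_mono[OF _ \<open>0 \<le> N\<close>] bound[of t] order_trans by blast
  moreover have "0 \<le> B"
    using bound[of 0] by simp
  ultimately have "\<eta> * N \<le> \<alpha> * B"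
    using \<open>0 < \<alpha>\<close> mult_left_mono[of "t * N" B \<alpha>] by (simp add: t_def)
  moreover have "0 \<le> \<alpha> * B"
    using \<open>0 \<le> \<alpha>\<close> \<open>0 \<le> B\<close> by simp
  ultimately show ?thesis
    by linarith
qed

lemma norm_step_le_of_cocoercive:
  fixes v d :: "'a::real_inner"
  assumes "\<eta> * (norm v)\<^sup>2 \<le> 2 * \<alpha> * (v \<bullet> d)" "0 \<le> \<eta>" "0 \<le> \<alpha>"
  shows "norm (\<alpha> *\<^sub>R d - \<eta> *\<^sub>R v) \<le> \<alpha> * norm d"
proof (rule power2_le_imp_le)
  have "(norm (\<alpha> *\<^sub>R d - \<eta> *\<^sub>R v))\<^sup>2
      = \<alpha>\<^sup>2 * (norm d)\<^sup>2 - \<eta> * (2 * \<alpha> * (v \<bullet> d) - \<eta> * (norm v)\<^sup>2)"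
    unfolding power2_norm_eq_inner by (simp add: inner_diff inner_commute power2_eq_square algebra_simps)
  also have "\<dots> \<le> (\<alpha> * norm d)\<^sup>2"
    using assms(1,2) by (simp add: power_mult_distrib)
  finally show "(norm (\<alpha> *\<^sub>R d - \<eta> *\<^sub>R v))\<^sup>2 \<le> (\<alpha> * norm d)\<^sup>2" .
qed (use assms(3) in simp)

section \<open>Strongly convex functions with Lipschitz gradient\<close>

lemma norm_square_expand: "(norm z)\<^sup>2 = (norm y)\<^sup>2 + 2 * (y \<bullet> (z - y)) + (norm (z - y))\<^sup>2"
  by (simp add: power2_norm_eq_inner inner_diff inner_commute)

locale strongly_convex_smooth =
  fixes S :: "'a::euclidean_space set" and h :: "'a \<Rightarrow> real" and g :: "'a \<Rightarrow> 'a"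
    and l u :: real
  assumes convex: "convex S"
    and deriv: "\<And>x. x \<in> S \<Longrightarrow> (h has_derivative (\<lambda>v. g x \<bullet> v)) (at x)"
    and strong: "\<And>x y. x \<in> S \<Longrightarrow> y \<in> S \<Longrightarrow>
                   h y \<ge> h x + g x \<bullet> (y - x) + l / 2 * (norm (x - y))\<^sup>2"
    and lipschitz: "\<And>x y. x \<in> S \<Longrightarrow> y \<in> S \<Longrightarrow> norm (g x - g y) \<le> u * norm (x - y)"
begin

lemma strong_convexity_le_smoothness:
  assumes "x \<in> S" "y \<in> S" "x \<noteq> y"
  shows "l \<le> u"
proof -
  have "h x + g x \<bullet> (y - x) + l / 2 * (norm (x - y))\<^sup>2 \<le> h y"
    and "h y + g y \<bullet> (x - y) + l / 2 * (norm (y - x))\<^sup>2 \<le> h x"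
    using strong assms by blast+
  then have "l * (norm (x - y))\<^sup>2 \<le> (g x - g y) \<bullet> (x - y)"
    by (simp add: inner_diff_left inner_diff_right norm_minus_commute)
  also have "\<dots> \<le> norm (g x - g y) * norm (x - y)"
    by (rule norm_cauchy_schwarz)
  also have "\<dots> \<le> u * norm (x - y) * norm (x - y)"
    using lipschitz[OF assms(1,2)] by (simp add: mult_right_mono)
  finally have "l * (norm (x - y) * norm (x - y)) \<le> u * (norm (x - y) * norm (x - y))"
    by (simp add: power2_eq_square mult.assoc)
  moreover have "0 < norm (x - y) * norm (x - y)"
    using assms(3) by simp
  ultimately show ?thesis
    by (rule mult_right_le_imp_le)
qed

lemma continuous_on_grad: "continuous_on S g"
proof -
  have "(max 0 u)-lipschitz_on S g"
  proof (rule lipschitz_onI)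
    fix x y
    assume "x \<in> S" "y \<in> S"
    have "u * norm (x - y) \<le> max 0 u * norm (x - y)"
      by (simp add: mult_right_mono)
    then show "dist (g x) (g y) \<le> max 0 u * dist x y"
      using lipschitz[OF \<open>x \<in> S\<close> \<open>y \<in> S\<close>] by (simp add: dist_norm)
  qed simp
  then show ?thesis
    by (rule lipschitz_on_continuous_on)
qed

text \<open>
  Subtracting l/2 |x|^2 leaves a convex function whose gradient is (u - l)-Lipschitz; its
  cocoercivity is what gives the contraction factor 1 - eta l instead of the cruder
  sqrt (1 - 2 eta l + eta^2 u^2).
\<close>

definition convex_part :: "'a \<Rightarrow> real"
  where "convex_part x = h x - l / 2 * (norm x)\<^sup>2"

definition convex_part_grad :: "'a \<Rightarrow> 'a"
  where "convex_part_grad x = g x - l *\<^sub>R x"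

lemma convex_part_ge_linearization:
  assumes "y \<in> S" "z \<in> S"
  shows "convex_part y + convex_part_grad y \<bullet> (z - y) \<le> convex_part z"
proof -
  have "h y + g y \<bullet> (z - y) + l / 2 * (norm (z - y))\<^sup>2 \<le> h z"
    using strong[OF assms] by (simp add: norm_minus_commute)
  moreover have "l / 2 * (norm z)\<^sup>2 = l / 2 * (norm y)\<^sup>2 + l * (y \<bullet> (z - y)) + l / 2 * (norm (z - y))\<^sup>2"
    by (subst norm_square_expand[of z y]) (simp add: algebra_simps)
  ultimately show ?thesis
    unfolding convex_part_def convex_part_grad_def inner_diff_left inner_scaleR_left by linarith
qed

lemma convex_part_le_quadratic:
  assumes "y \<in> S" "z \<in> S"
  shows "convex_part z \<le> convex_part y + convex_part_grad y \<bullet> (z - y) + (u - l) / 2 * (norm (z - y))\<^sup>2"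
proof -
  have "h z \<le> h y + g y \<bullet> (z - y) + u / 2 * (norm (z - y))\<^sup>2"
    by (rule descent_lemma[OF convex assms deriv lipschitz])
  moreover have "l / 2 * (norm z)\<^sup>2 = l / 2 * (norm y)\<^sup>2 + l * (y \<bullet> (z - y)) + l / 2 * (norm (z - y))\<^sup>2"
    by (subst norm_square_expand[of z y]) (simp add: algebra_simps)
  ultimately show ?thesis
    unfolding convex_part_def convex_part_grad_def inner_diff_left inner_scaleR_left
      diff_divide_distrib left_diff_distrib
    by linarith
qed

text \<open>
  The test vector c need not be small: after splitting the segment from x to y into n pieces
  with |c| / n < r, each piece admits the test vector c / n, and the n inequalities add up.
\<close>

lemma convex_part_pair_inequality_uniform_radius:
  assumes "subspace V" "0 < r" "c \<in> V"
    and x: "\<And>v. v \<in> V \<Longrightarrow> norm v < r \<Longrightarrow> x + v \<in> S"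
    and y: "\<And>v. v \<in> V \<Longrightarrow> norm v < r \<Longrightarrow> y + v \<in> S"
  shows "2 * ((convex_part_grad y - convex_part_grad x) \<bullet> c) - (u - l) * (norm c)\<^sup>2
           \<le> (convex_part_grad y - convex_part_grad x) \<bullet> (y - x)"
proof -
  obtain n :: nat where n: "norm c / r < n"
    using reals_Archimedean2 by blast
  have "0 < n"
    using n \<open>0 < r\<close> by (metis divide_nonneg_pos norm_ge_zero of_nat_0_less_iff order_le_less_trans)
  define p where "p i = x + (real i / n) *\<^sub>R (y - x)" for i
  define w where "w i = convex_part_grad (p (Suc i)) - convex_part_grad (p i)" for i
  define c' where "c' = (1 / n) *\<^sub>R c"
  have c': "c' \<in> V" "- c' \<in> V" "norm c' < r" "norm (- c') < r"
    using assms(1,3) n \<open>0 < r\<close> \<open>0 < n\<close>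
    by (auto simp: c'_def subspace_scale subspace_neg divide_simps mult.commute)
  have p_ball: "p i + v \<in> S" if "i \<le> n" "v \<in> V" "norm v < r" for i v
    unfolding p_def using that \<open>0 < n\<close> by (intro segment_common_ball[OF convex _ _ x y]) auto
  have p_step: "p (Suc i) - p i = (1 / n) *\<^sub>R (y - x)" for i
    by (simp add: p_def algebra_simps add_divide_distrib)
  have local: "2 * (w i \<bullet> c) - (u - l) * (norm c)\<^sup>2 / n \<le> w i \<bullet> (y - x)" if "i < n" for i
  proof -
    have "p i \<in> S" "p (Suc i) \<in> S" "p (Suc i) - c' \<in> S" "p i + c' \<in> S"
      using p_ball[of i 0] p_ball[of "Suc i" 0] p_ball[of "Suc i" "- c'"] p_ball[of i c'] c'
        subspace_0[OF assms(1)] that \<open>0 < r\<close> by auto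
    from gradient_pair_inequality[OF convex_part_ge_linearization convex_part_le_quadratic this]
    have "2 * (w i \<bullet> c') - (u - l) * (norm c')\<^sup>2 \<le> w i \<bullet> (p (Suc i) - p i)"
      by (simp add: w_def)
    then have "2 * (w i \<bullet> c) / n - (u - l) * (norm c)\<^sup>2 / n\<^sup>2 \<le> w i \<bullet> (y - x) / n"
      by (simp add: c'_def p_step power_divide)
    then have "n * (2 * (w i \<bullet> c) / n - (u - l) * (norm c)\<^sup>2 / n\<^sup>2) \<le> n * (w i \<bullet> (y - x) / n)"
      by (rule mult_left_mono) simp
    then show ?thesis
      using \<open>0 < n\<close> by (simp add: right_diff_distrib power2_eq_square)
  qed
  have "2 * ((\<Sum>i<n. w i) \<bullet> c) - (u - l) * (norm c)\<^sup>2
          = (\<Sum>i<n. 2 * (w i \<bullet> c) - (u - l) * (norm c)\<^sup>2 / n)"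
    using \<open>0 < n\<close> by (simp add: sum_subtractf inner_sum_left sum_distrib_left)
  also have "\<dots> \<le> (\<Sum>i<n. w i \<bullet> (y - x))"
    using local by (rule sum_mono) simp
  also have "\<dots> = (\<Sum>i<n. w i) \<bullet> (y - x)"
    by (simp add: inner_sum_left)
  finally show ?thesis
    using sum_lessThan_telescope[of "\<lambda>i. convex_part_grad (p i)" n] \<open>0 < n\<close>
    by (simp add: w_def p_def)
qed

text \<open>
  Shrinking x and y by a factor s towards a relative interior point gives points with the
  common radius s r; the inequality then passes to s = 0 by continuity of g.
\<close>

lemma convex_part_pair_inequality:
  assumes "x \<in> S" "y \<in> S" "c \<in> directions S"
  shows "2 * ((convex_part_grad y - convex_part_grad x) \<bullet> c) - (u - l) * (norm c)\<^sup>2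
           \<le> (convex_part_grad y - convex_part_grad x) \<bullet> (y - x)"
proof -
  obtain c\<^sub>0 where "c\<^sub>0 \<in> rel_interior S"
    using rel_interior_eq_empty[OF convex] assms(1) by blast
  then obtain r where "0 < r" and r: "\<And>v. v \<in> directions S \<Longrightarrow> norm v < r \<Longrightarrow> c\<^sub>0 + v \<in> S"
    using rel_interior_directions_ball by blast
  have "c\<^sub>0 \<in> S"
    using \<open>c\<^sub>0 \<in> rel_interior S\<close> rel_interior_subset by blast
  define shrink where "shrink s z = z + s *\<^sub>R (c\<^sub>0 - z)" for s z
  define W where "W s = convex_part_grad (shrink s y) - convex_part_grad (shrink s x)" for s
  define Q where "Q s = W s \<bullet> (shrink s y - shrink s x) - 2 * (W s \<bullet> c) + (u - l) * (norm c)\<^sup>2" for s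
  have shrink_S: "shrink s z \<in> S" if "z \<in> S" "0 \<le> s" "s \<le> 1" for s z
    using convexD_alt[OF convex that(1) \<open>c\<^sub>0 \<in> S\<close> that(2,3)] by (simp add: shrink_def algebra_simps)
  have "0 \<le> Q s" if "s \<in> {0<..1}" for s
  proof -
    have "2 * (W s \<bullet> c) - (u - l) * (norm c)\<^sup>2 \<le> W s \<bullet> (shrink s y - shrink s x)"
      unfolding W_def
    proof (rule convex_part_pair_inequality_uniform_radius[OF subspace_directions _ assms(3), where r = "s * r"])
      show "0 < s * r"
        using that \<open>0 < r\<close> by simp
    next
      fix v
      assume "v \<in> directions S" "norm v < s * r"
      with that show "shrink s x + v \<in> S" "shrink s y + v \<in> S"
        unfolding shrink_def by (auto intro: shrink_directions_ball[OF convex _ _ _ r] assms(1,2))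
    qed
    then show ?thesis
      by (simp add: Q_def)
  qed
  moreover have "continuous_on {0..1} Q"
  proof -
    have shrink_cont: "continuous_on {0..1} (\<lambda>s. shrink s z)" for z
      unfolding shrink_def by (intro continuous_intros)
    have "continuous_on {0..1} (\<lambda>s. g (shrink s z))" if "z \<in> S" for z
      by (rule continuous_on_compose2[OF continuous_on_grad shrink_cont]) (auto intro: shrink_S[OF that])
    with shrink_cont assms(1,2) show ?thesis
      unfolding Q_def W_def convex_part_grad_def by (intro continuous_intros) auto
  qed
  ultimately have "0 \<le> Q 0"
    using continuous_ge_on_closure[of "{0<..1}" Q 0 0] by simp
  then show ?thesis
    by (simp add: Q_def W_def shrink_def)
qed

lemma convex_part_grad_cocoercive:
  assumes "x \<in> S" "y \<in> S" "w \<in> directions S"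
    and orth: "\<And>v. v \<in> directions S \<Longrightarrow> (convex_part_grad x - convex_part_grad y - w) \<bullet> v = 0"
    and "0 < \<eta>" "0 \<le> \<alpha>" "\<eta> * (u - l) \<le> \<alpha>"
  shows "\<eta> * (norm w)\<^sup>2 \<le> 2 * \<alpha> * ((convex_part_grad x - convex_part_grad y) \<bullet> (x - y))"
proof (rule quadratic_bound_imp_le[OF _ _ assms(5-7)])
  fix t
  have "t *\<^sub>R w \<in> directions S"
    using \<open>w \<in> directions S\<close> by (simp add: subspace_scale[OF subspace_directions])
  from convex_part_pair_inequality[OF assms(2,1) this]
  have "2 * ((convex_part_grad x - convex_part_grad y) \<bullet> (t *\<^sub>R w)) - (u - l) * (norm (t *\<^sub>R w))\<^sup>2
      \<le> (convex_part_grad x - convex_part_grad y) \<bullet> (x - y)" .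
  moreover have "(convex_part_grad x - convex_part_grad y) \<bullet> w = (norm w)\<^sup>2"
    using orth[OF \<open>w \<in> directions S\<close>] by (simp add: inner_diff_left power2_norm_eq_inner)
  ultimately show "(2 * t - (u - l) * t\<^sup>2) * (norm w)\<^sup>2
      \<le> (convex_part_grad x - convex_part_grad y) \<bullet> (x - y)"
    by (simp add: power_mult_distrib left_diff_distrib mult.assoc)
qed simp

text \<open>
  Only the component w_V of the gradient difference along the directions of S affects the
  projected step, and w_V is cocoercive.
\<close>

lemma projected_gradient_step_contraction:
  assumes "closed S" "x \<in> S" "y \<in> S" "0 < \<eta>" "\<eta> * u \<le> 1"
  shows "norm (closest_point S (x - \<eta> *\<^sub>R g x) - closest_point S (y - \<eta> *\<^sub>R g y))
           \<le> (1 - \<eta> * l) * norm (x - y)"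
proof (cases "x = y")
  case False
  define \<alpha> where "\<alpha> = 1 - \<eta> * l"
  define d where "d = x - y"
  define w where "w = convex_part_grad x - convex_part_grad y"
  define e where "e = closest_point S (x - \<eta> *\<^sub>R g x) - closest_point S (y - \<eta> *\<^sub>R g y)"
  have "\<eta> * l \<le> \<eta> * u"
    using strong_convexity_le_smoothness[OF assms(2,3) False] assms(4) by simp
  then have "0 \<le> \<alpha>" "\<eta> * (u - l) \<le> \<alpha>"
    using assms(5) by (simp_all add: \<alpha>_def right_diff_distrib)
  have V: "span (directions S) = directions S"
    by (simp add: subspace_directions)
  obtain w\<^sub>V where "w\<^sub>V \<in> directions S" and orth: "\<And>v. v \<in> directions S \<Longrightarrow> (w - w\<^sub>V) \<bullet> v = 0"
    using orthogonal_subspace_decomp_exists[of "directions S" w] unfolding V orthogonal_def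
    by (metis add_diff_cancel_left')
  have "d \<in> directions S" "e \<in> directions S"
    unfolding d_def e_def using assms(1-3) closest_point_in_set[of S]
    by (auto intro: diff_in_directions)
  have step_diff: "(x - \<eta> *\<^sub>R g x) - (y - \<eta> *\<^sub>R g y) = \<alpha> *\<^sub>R d - \<eta> *\<^sub>R w"
    by (simp add: \<alpha>_def d_def w_def convex_part_grad_def algebra_simps)
  have "S \<noteq> {}"
    using assms(2) by blast
  have "(norm e)\<^sup>2 \<le> (\<alpha> *\<^sub>R d - \<eta> *\<^sub>R w) \<bullet> e"
    using closest_point_firmly_nonexpansive[OF convex assms(1) \<open>S \<noteq> {}\<close>]
    unfolding e_def step_diff[symmetric] .
  also have "\<dots> = (\<alpha> *\<^sub>R d - \<eta> *\<^sub>R w\<^sub>V) \<bullet> e"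
    using orth[OF \<open>e \<in> directions S\<close>] by (simp add: inner_diff_left)
  also have "\<dots> \<le> norm (\<alpha> *\<^sub>R d - \<eta> *\<^sub>R w\<^sub>V) * norm e"
    by (rule norm_cauchy_schwarz)
  finally have "norm e \<le> norm (\<alpha> *\<^sub>R d - \<eta> *\<^sub>R w\<^sub>V)"
    by (cases "e = 0") (simp_all add: power2_eq_square)
  also have "\<dots> \<le> \<alpha> * norm d"
  proof (rule norm_step_le_of_cocoercive)
    have "\<eta> * (norm w\<^sub>V)\<^sup>2 \<le> 2 * \<alpha> * (w \<bullet> d)"
      unfolding w_def d_def using orth
      by (intro convex_part_grad_cocoercive[OF assms(2,3) \<open>w\<^sub>V \<in> directions S\<close> _ assms(4)
            \<open>0 \<le> \<alpha>\<close> \<open>\<eta> * (u - l) \<le> \<alpha>\<close>]) (simp add: w_def)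
    moreover have "w\<^sub>V \<bullet> d = w \<bullet> d"
      using orth[OF \<open>d \<in> directions S\<close>] by (simp add: inner_diff_left)
    ultimately show "\<eta> * (norm w\<^sub>V)\<^sup>2 \<le> 2 * \<alpha> * (w\<^sub>V \<bullet> d)"
      by simp
  qed (use assms(4) \<open>0 \<le> \<alpha>\<close> in simp_all)
  finally show ?thesis
    by (simp add: e_def \<alpha>_def d_def)
qed simp

lemma projected_gradient_step_toward_minimizer:
  assumes "closed S" "x \<in> S" "x_min \<in> S" "\<And>z. z \<in> S \<Longrightarrow> h x_min \<le> h z" "0 < \<eta>" "\<eta> * u \<le> 1"
  shows "norm (closest_point S (x - \<eta> *\<^sub>R g x) - x_min) \<le> (1 - \<eta> * l) * norm (x - x_min)"
  using projected_gradient_step_contraction[OF assms(1-3,5,6)]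
    closest_point_gradient_step_minimizer[OF convex assms(1,3) _ deriv[OF assms(3)] assms(4)] assms(5)
  by simp

end

section \<open>Tracking the moving minimizers\<close>

lemma sum_le_of_linear_recursion:
  fixes e v :: "nat \<Rightarrow> real"
  assumes rec: "\<And>t. t \<in> {1..<T} \<Longrightarrow> e (Suc t) \<le> (1 - \<kappa>) * e t + v (Suc t)"
    and "\<kappa> \<le> 1" and nonneg: "\<And>t. 0 \<le> e t"
  shows "\<kappa> * (\<Sum>t=1..T. e t) \<le> e 1 + (\<Sum>t=2..T. v t)"
proof (cases T)
  case 0
  then show ?thesis
    using nonneg[of 1] by simp
next
  case (Suc n)
  have "(\<Sum>t=2..Suc n. v t) = (\<Sum>t=1..n. v (Suc t))"
    by (induction n) simp_all
  then have v_shift: "(\<Sum>t=2..T. v t) = (\<Sum>t=1..n. v (Suc t))"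
    by (simp add: Suc)
  have "(\<Sum>t=1..Suc n. e t) = e 1 + (\<Sum>t=1..n. e (Suc t))"
    by (induction n) simp_all
  then have "(\<Sum>t=1..T. e t) = e 1 + (\<Sum>t=1..n. e (Suc t))"
    by (simp add: Suc)
  also have "\<dots> \<le> e 1 + ((1 - \<kappa>) * (\<Sum>t=1..n. e t) + (\<Sum>t=2..T. v t))"
  proof -
    have "(\<Sum>t=1..n. e (Suc t)) \<le> (\<Sum>t=1..n. (1 - \<kappa>) * e t + v (Suc t))"
      using rec by (intro sum_mono) (auto simp: Suc)
    then show ?thesis
      by (simp add: sum.distrib v_shift flip: sum_distrib_left)
  qed
  also have "\<dots> \<le> e 1 + ((1 - \<kappa>) * (\<Sum>t=1..T. e t) + (\<Sum>t=2..T. v t))"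
    using \<open>\<kappa> \<le> 1\<close> nonneg by (simp add: mult_left_mono sum_mono2 Suc)
  finally have "(\<Sum>t=1..T. e t) \<le> e 1 + ((1 - \<kappa>) * (\<Sum>t=1..T. e t) + (\<Sum>t=2..T. v t))" .
  then show ?thesis
    unfolding left_diff_distrib mult_1 by linarith
qed

lemma step_size_bounds:
  fixes \<gamma> l u :: real and t :: nat
  assumes "0 \<le> \<gamma>" "\<gamma> < 1" "1 \<le> t" "0 < l" "l \<le> u"
  defines "\<eta> \<equiv> (1 - \<gamma>) / (l * (\<gamma> - \<gamma> ^ t) + u * (1 - \<gamma>))"
  shows "0 < \<eta>" "\<eta> * u \<le> 1" "1 / (\<gamma> / (1 - \<gamma>) + u / l) \<le> \<eta> * l"
proof -
  define D where "D = l * (\<gamma> - \<gamma> ^ t) + u * (1 - \<gamma>)"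
  have "\<gamma> ^ t \<le> \<gamma>"
    using power_decreasing[OF \<open>1 \<le> t\<close>, of \<gamma>] assms(1,2) by simp
  moreover have "0 \<le> \<gamma> ^ t"
    using assms(1) by simp
  ultimately have "0 \<le> l * (\<gamma> - \<gamma> ^ t)" "l * (\<gamma> - \<gamma> ^ t) \<le> l * \<gamma>"
    using assms(4) by simp_all
  moreover have "0 < u * (1 - \<gamma>)"
    using assms(2,4,5) by simp
  ultimately have D: "u * (1 - \<gamma>) \<le> D" "0 < D" "D \<le> l * \<gamma> + u * (1 - \<gamma>)"
    by (auto simp: D_def)
  have \<eta>: "\<eta> = (1 - \<gamma>) / D"
    by (simp add: \<eta>_def D_def)
  show "0 < \<eta>"
    using D assms(2) by (simp add: \<eta>)
  show "\<eta> * u \<le> 1"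
    using D by (simp add: \<eta> mult.commute)
  have "1 / (\<gamma> / (1 - \<gamma>) + u / l) = (1 - \<gamma>) * l / (l * \<gamma> + u * (1 - \<gamma>))"
    using assms(2,4) by (simp add: field_simps)
  also have "\<dots> \<le> (1 - \<gamma>) * l / D"
    using D assms(2,4) by (intro divide_left_mono) auto
  also have "\<dots> = \<eta> * l"
    by (simp add: \<eta>)
  finally show "1 / (\<gamma> / (1 - \<gamma>) + u / l) \<le> \<eta> * l" .
qed

lemma suboptimality_le_gradient_bound:
  assumes "h x + g \<bullet> (y - x) + l / 2 * (norm (x - y))\<^sup>2 \<le> h y" "0 \<le> l" "norm g \<le> G"
  shows "h x - h y \<le> G * norm (x - y)"
proof -
  have "- (g \<bullet> (y - x)) \<le> norm g * norm (x - y)"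
    using norm_cauchy_schwarz[of g "x - y"] by (simp add: inner_diff_right)
  also have "\<dots> \<le> G * norm (x - y)"
    using assms(3) by (simp add: mult_right_mono)
  finally have "- (g \<bullet> (y - x)) \<le> G * norm (x - y)" .
  moreover have "0 \<le> l / 2 * (norm (x - y))\<^sup>2"
    using assms(2) by simp
  ultimately show ?thesis
    using assms(1) by linarith
qed

lemma projected_iterates_in_set:
  assumes "closed S" "\<theta> 1 \<in> S" "\<And>t. t \<in> {1..<T} \<Longrightarrow> \<theta> (Suc t) = closest_point S (p t)"
    and "t \<in> {1..T}"
  shows "\<theta> t \<in> S"
proof (cases "t = 1")
  case False
  then obtain s where "t = Suc s" "s \<in> {1..<T}"
    using assms(4) by (cases t) auto
  then show ?thesis
    using assms(1-3) closest_point_in_set[of S] by auto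
qed (use assms(2) in simp)

lemma projected_gradient_tracking:
  assumes "closed S"
    and scs: "\<And>t. t \<in> {1..T} \<Longrightarrow> strongly_convex_smooth S (f t) (grad t) l u"
    and iterates: "\<And>t. t \<in> {1..T} \<Longrightarrow> \<theta> t \<in> S"
    and opt: "\<And>t. t \<in> {1..T} \<Longrightarrow> \<theta>s t \<in> S \<and> (\<forall>y\<in>S. f t (\<theta>s t) \<le> f t y)"
    and step: "\<And>t. t \<in> {1..<T} \<Longrightarrow> \<theta> (Suc t) = closest_point S (\<theta> t - \<eta> t *\<^sub>R grad t (\<theta> t))"
    and rate: "\<And>t. t \<in> {1..<T} \<Longrightarrow> 0 < \<eta> t \<and> \<eta> t * u \<le> 1 \<and> \<kappa> \<le> \<eta> t * l"
    and "\<kappa> \<le> 1"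
  shows "\<kappa> * (\<Sum>t=1..T. norm (\<theta> t - \<theta>s t))
           \<le> norm (\<theta> 1 - \<theta>s 1) + (\<Sum>t=2..T. norm (\<theta>s t - \<theta>s (t - 1)))"
proof -
  have "norm (\<theta> (Suc t) - \<theta>s (Suc t))
      \<le> (1 - \<kappa>) * norm (\<theta> t - \<theta>s t) + norm (\<theta>s (Suc t) - \<theta>s (Suc t - 1))"
    if t: "t \<in> {1..<T}" for t
  proof -
    have "t \<in> {1..T}"
      using t by simp
    have "norm (\<theta> (Suc t) - \<theta>s t) \<le> (1 - \<eta> t * l) * norm (\<theta> t - \<theta>s t)"
      unfolding step[OF t]
      using strongly_convex_smooth.projected_gradient_step_toward_minimizer[OF scs[OF \<open>t \<in> {1..T}\<close>]
          \<open>closed S\<close> iterates[OF \<open>t \<in> {1..T}\<close>]] opt[OF \<open>t \<in> {1..T}\<close>] rate[OF t]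
      by blast
    also have "\<dots> \<le> (1 - \<kappa>) * norm (\<theta> t - \<theta>s t)"
      using rate[OF t] by (simp add: mult_right_mono)
    finally show ?thesis
      using norm_triangle_ineq[of "\<theta> (Suc t) - \<theta>s t" "\<theta>s t - \<theta>s (Suc t)"]
      by (simp add: norm_minus_commute)
  qed
  then show ?thesis
    by (intro sum_le_of_linear_recursion[OF _ \<open>\<kappa> \<le> 1\<close>]) auto
qed

lemma step_size_rate:
  fixes \<beta> \<gamma> l u :: real and T t :: nat
  assumes "1 \<le> T" "0 < \<beta>" "1 - \<gamma> = 1 / (real T powr \<beta>)" "1 \<le> t" "0 < l" "l \<le> u"
  defines "\<eta> \<equiv> (1 - \<gamma>) / (l * (\<gamma> - \<gamma> ^ t) + u * (1 - \<gamma>))"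
  shows "0 < \<eta> \<and> \<eta> * u \<le> 1 \<and> 1 / (real T powr \<beta> - 1 + u / l) \<le> \<eta> * l"
proof -
  define P where "P = real T powr \<beta>"
  have "1 \<le> P"
    using assms(1,2) by (simp add: P_def ge_one_powr_ge_zero)
  have \<gamma>: "\<gamma> = 1 - 1 / P"
    using assms(3) by (simp add: P_def)
  have "0 \<le> \<gamma>" "\<gamma> < 1"
    using \<open>1 \<le> P\<close> by (simp_all add: \<gamma>)
  moreover have ratio: "\<gamma> / (1 - \<gamma>) = P - 1"
    using \<open>1 \<le> P\<close> by (simp add: \<gamma> field_simps)
  ultimately show ?thesis
    using step_size_bounds[of \<gamma> t l u] assms(4-6) unfolding \<eta>_def ratio P_def by simp
qed

lemma projected_gradient_tracking_bound:
  assumes "closed S" "1 \<le> T" "0 < \<beta>" "0 < l"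
    and scs: "\<And>t. t \<in> {1..T} \<Longrightarrow> strongly_convex_smooth S (f t) (grad t) l u"
    and iterates: "\<And>t. t \<in> {1..T} \<Longrightarrow> \<theta> t \<in> S"
    and opt: "\<And>t. t \<in> {1..T} \<Longrightarrow> \<theta>s t \<in> S \<and> (\<forall>y\<in>S. f t (\<theta>s t) \<le> f t y)"
    and step: "\<And>t. t \<in> {1..<T} \<Longrightarrow> \<theta> (Suc t) = closest_point S (\<theta> t - \<eta> t *\<^sub>R grad t (\<theta> t))"
    and gamma: "1 - \<gamma> = 1 / (real T powr \<beta>)"
    and eta: "\<And>t. \<eta> t = (1 - \<gamma>) / (l * (\<gamma> - \<gamma> ^ t) + u * (1 - \<gamma>))"
  shows "(\<Sum>t=1..T. norm (\<theta> t - \<theta>s t))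
           \<le> (real T powr \<beta> - 1 + u / l) * (norm (\<theta> 1 - \<theta>s 1) + (\<Sum>t=2..T. norm (\<theta>s t - \<theta>s (t - 1))))"
    (is "?E \<le> ?M * ?V")
proof (cases "l \<le> u")
  case True
  have "1 \<le> real T powr \<beta>"
    using assms(2,3) by (intro ge_one_powr_ge_zero) auto
  moreover have "1 \<le> u / l"
    using True \<open>0 < l\<close> by simp
  ultimately have "1 \<le> ?M"
    by simp
  have "1 / ?M * ?E \<le> ?V"
  proof (rule projected_gradient_tracking[where f = f and grad = grad and \<theta> = \<theta> and \<theta>s = \<theta>s,
        OF \<open>closed S\<close> scs iterates opt step])
    show "0 < \<eta> t \<and> \<eta> t * u \<le> 1 \<and> 1 / ?M \<le> \<eta> t * l" if "t \<in> {1..<T}" for t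
      using step_size_rate[OF assms(2,3) gamma _ \<open>0 < l\<close> True, of t] that by (simp add: eta)
  qed (use \<open>1 \<le> ?M\<close> in auto)
  then show ?thesis
    using \<open>1 \<le> ?M\<close> by (simp add: field_simps)
next
  case False
  \<comment> \<open>then S has at most one point and both sides vanish\<close>
  then have same: "x = y" if "x \<in> S" "y \<in> S" for x y
    using strongly_convex_smooth.strong_convexity_le_smoothness[OF scs] that assms(2) by fastforce
  have "\<theta> t = \<theta>s t" if "t \<in> {1..T}" for t
    using same iterates opt that by blast
  moreover have "\<theta>s t = \<theta>s (t - 1)" if "t \<in> {2..T}" for t
  proof -
    have "t \<in> {1..T}" "t - 1 \<in> {1..T}"
      using that by auto
    then show ?thesis
      using same opt by blast
  qed
  ultimately show ?thesis
    using assms(2) by simp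
qed

theorem theorem3p4:
  fixes S :: "'a::euclidean_space set"
    and f :: "nat \<Rightarrow> 'a \<Rightarrow> real"
    and grad :: "nat \<Rightarrow> 'a \<Rightarrow> 'a"
    and \<theta> \<theta>s :: "nat \<Rightarrow> 'a"
    and T :: nat
    and l u G \<beta> \<gamma> :: real
    and \<eta> :: "nat \<Rightarrow> real"
  assumes S: "compact S" "convex S"
    and T: "T \<ge> 1"
    and l: "l > 0"
    and diff: "\<And>t x. t \<in> {1..T} \<Longrightarrow> x \<in> S \<Longrightarrow>
                 (f t has_derivative (\<lambda>h. grad t x \<bullet> h)) (at x)"
    and strong: "\<And>t x y. t \<in> {1..T} \<Longrightarrow> x \<in> S \<Longrightarrow> y \<in> S \<Longrightarrow>
                 f t y \<ge> f t x + grad t x \<bullet> (y - x) + l / 2 * (norm (x - y))\<^sup>2"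
    and smooth: "\<And>t x y. t \<in> {1..T} \<Longrightarrow> x \<in> S \<Longrightarrow> y \<in> S \<Longrightarrow>
                 norm (grad t x - grad t y) \<le> u * norm (x - y)"
    and bound: "\<And>t x. t \<in> {1..T} \<Longrightarrow> x \<in> S \<Longrightarrow> norm (grad t x) \<le> G"
    and beta: "0 < \<beta>" "\<beta> < 1"
    and gamma: "1 - \<gamma> = 1 / (real T powr \<beta>)"
    and eta: "\<And>t. \<eta> t = (1 - \<gamma>) / (l * (\<gamma> - \<gamma> ^ t) + u * (1 - \<gamma>))"
    and init: "\<theta> 1 \<in> S"
    and step: "\<And>t. t \<in> {1..<T} \<Longrightarrow>
                 \<theta> (Suc t) = closest_point S (\<theta> t - \<eta> t *\<^sub>R grad t (\<theta> t))"
    and opt: "\<And>t. t \<in> {1..T} \<Longrightarrow> \<theta>s t \<in> S \<and> (\<forall>y\<in>S. f t (\<theta>s t) \<le> f t y)"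
  shows "(\<Sum>t=1..T. f t (\<theta> t) - f t (\<theta>s t))
           \<le> G * (2 * (real T powr \<beta> - 1) + u / l)
               * (norm (\<theta> 1 - \<theta>s 1) + (\<Sum>t=2..T. norm (\<theta>s t - \<theta>s (t - 1))))"
proof -
  have "closed S"
    using S(1) by (rule compact_imp_closed)
  have iterates: "\<theta> t \<in> S" if "t \<in> {1..T}" for t
    using projected_iterates_in_set[OF \<open>closed S\<close> init step that] .
  have scs: "strongly_convex_smooth S (f t) (grad t) l u" if "t \<in> {1..T}" for t
    by unfold_locales (use S(2) diff strong smooth that in blast)+
  have "0 \<le> G"
    using order_trans[OF norm_ge_zero bound] init T by fastforce
  define V where "V = norm (\<theta> 1 - \<theta>s 1) + (\<Sum>t=2..T. norm (\<theta>s t - \<theta>s (t - 1)))"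
  have "f t (\<theta> t) - f t (\<theta>s t) \<le> G * norm (\<theta> t - \<theta>s t)" if "t \<in> {1..T}" for t
    using strong[OF that iterates[OF that] conjunct1[OF opt[OF that]]] bound[OF that iterates[OF that]] l
    by (intro suboptimality_le_gradient_bound[where h = "f t"]) auto
  then have "(\<Sum>t=1..T. f t (\<theta> t) - f t (\<theta>s t)) \<le> G * (\<Sum>t=1..T. norm (\<theta> t - \<theta>s t))"
    unfolding sum_distrib_left by (rule sum_mono)
  also have "\<dots> \<le> G * ((real T powr \<beta> - 1 + u / l) * V)"
    using projected_gradient_tracking_bound[OF \<open>closed S\<close> T beta(1) l scs iterates opt step gamma eta] \<open>0 \<le> G\<close>
    unfolding V_def by (rule mult_left_mono) auto
  also have "\<dots> \<le> G * ((2 * (real T powr \<beta> - 1) + u / l) * V)"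
    using ge_one_powr_ge_zero[of T \<beta>] T beta(1) \<open>0 \<le> G\<close>
    by (intro mult_left_mono mult_right_mono) (auto simp: V_def sum_nonneg)
  finally show ?thesis
    by (simp add: V_def mult.assoc)
qed

end
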